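(* Let $S\in\mathbb N$, $I\in\mathbb N$, $\eta>0$, $\kappa_r>0$, $\lambda>0$, and let $\rho_b,\rho_d,\kappa_i:\mathbb N\to[0,\infty)$ be bounded with $\rho_b(0)=\rho_d(0)=\kappa_i(0)=0$. Let $\mathbf X=\{0,\dots,S\}\times\mathbb N\times\{0,\dots,S+I\}$. Suppose $v:\mathbb N\to\mathbb R$ is bounded and satisfies, for every $c\in\mathbb N$, $v(c)=\min\Big\{\frac{\rho_b(c)v(c+1)+\rho_d(c)v(c-1)+\frac{\kappa_i(c)}{\eta+\kappa_r}}{\eta+\rho_b(c)+\rho_d(c)+\kappa_i(c)};\ \lambda\Big\}\qquad(\ast)$ (the term $\rho_d(0)v(-1)$ being $0$). Then $V(s,c,i)=s\,v(c)+\frac{i}{\eta+\kappa_r}$ is a bounded solution on $\mathbf X$ of the system $(\ast\ast)$: for $s\ge1$, $\min\Big\{-\eta V(s,c,i)+\rho_b(c)V(s,c+1,i)+\rho_d(c)V(s,c-1,i)+s\kappa_i(c)V(s-1,c,i+1)+i\kappa_rV(s,c,i-1)-V(s,c,i)[\rho_b(c)+\rho_d(c)+s\kappa_i(c)+i\kappa_r]+i;\ -V(s,c,i)+V(s-1,c,i)+\lambda\Big\}=0,$ and for $s=0$, $-\eta V(0,c,i)+\rho_b(c)V(0,c+1,i)+\rho_d(c)V(0,c-1,i)+i\kappa_rV(0,c,i-1)-V(0,c,i)[\rho_b(c)+\rho_d(c)+i\kappa_r]+i=0$ (terms with a zero coefficient are taken to be $0$). Moreover, for $(s,c,i)\in\mathbf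 X$ with $s\ge1$, the first (respectively, second) expression inside the minimum in $(\ast)$ equals $v(c)$ if and only if the first (respectively, second) expression inside the minimum in $(\ast\ast)$ equals zero.
   Context: This is the Bellman equation of an epidemic model with carriers: state $(s,c,i)$ = numbers of susceptibles, carriers and infectives; carriers follow a birth-death process with rates $\rho_b(c),\rho_d(c)$; each susceptible becomes infective at rate $\kappa_i(c)$; each infective recovers at rate $\kappa_r$; cost rate $i$; impulsive action immunizes one susceptible $(s,c,i)\to(s-1,c,i)$ at cost $\lambda$; discount factor $\eta$. *)

theory Defs
  imports "HOL-Analysis.Analysis"
begin

definition scalar_rhs ::
  "real \<Rightarrow> real \<Rightarrow> (nat \<Rightarrow> real) \<Rightarrow> (nat \<Rightarrow> real) \<Rightarrow> (nat \<Rightarrow> real) \<Rightarrow> (nat \<Rightarrow> real) \<Rightarrow> nat \<Rightarrow> real" where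
  "scalar_rhs \<eta> \<kappa>r \<rho>b \<rho>d \<kappa>i v c =
     (\<rho>b c * v (c + 1) + (if c = 0 then 0 else \<rho>d c * v (c - 1)) + \<kappa>i c / (\<eta> + \<kappa>r))
     / (\<eta> + \<rho>b c + \<rho>d c + \<kappa>i c)"

definition Vfun :: "real \<Rightarrow> real \<Rightarrow> (nat \<Rightarrow> real) \<Rightarrow> nat \<Rightarrow> nat \<Rightarrow> nat \<Rightarrow> real" where
  "Vfun \<eta> \<kappa>r v s c i = real s * v c + real i / (\<eta> + \<kappa>r)"

definition cont_expr ::
  "real \<Rightarrow> real \<Rightarrow> (nat \<Rightarrow> real) \<Rightarrow> (nat \<Rightarrow> real) \<Rightarrow> (nat \<Rightarrow> real)
   \<Rightarrow> (nat \<Rightarrow> nat \<Rightarrow> nat \<Rightarrow> real) \<Rightarrow> nat \<Rightarrow> nat \<Rightarrow> nat \<Rightarrow> real" where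
  "cont_expr \<eta> \<kappa>r \<rho>b \<rho>d \<kappa>i V s c i =
     - \<eta> * V s c i + \<rho>b c * V s (c + 1) i
     + (if c = 0 then 0 else \<rho>d c * V s (c - 1) i)
     + (if s = 0 then 0 else real s * \<kappa>i c * V (s - 1) c (i + 1))
     + (if i = 0 then 0 else real i * \<kappa>r * V s c (i - 1))
     - V s c i * (\<rho>b c + \<rho>d c + real s * \<kappa>i c + real i * \<kappa>r) + real i"

definition interv_expr ::
  "real \<Rightarrow> (nat \<Rightarrow> nat \<Rightarrow> nat \<Rightarrow> real) \<Rightarrow> nat \<Rightarrow> nat \<Rightarrow> nat \<Rightarrow> real" where
  "interv_expr lam V s c i = - V s c i + V (s - 1) c i + lam"

definition stateX :: "nat \<Rightarrow> nat \<Rightarrow> (nat \<times> nat \<times> nat) set" where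
  "stateX S I = {0..S} \<times> UNIV \<times> {0..S + I}"

end

theory Submission
  imports Defs
begin

text \<open>Substituting V(s,c,i) = s v(c) + i/(eta + kappa_r) into the system, the terms linear in i
  cancel because 1/(eta + kappa_r) is exactly the discounted cost of one infective, and the
  continuation expression becomes s D(c) (rhs(c) - v(c)) with D(c) = eta + rho_b(c) + rho_d(c)
  + kappa_i(c) > 0, while the intervention expression becomes lambda - v(c). So for s \<ge> 1
  the system is the scalar equation with its first branch scaled by the positive factor s D(c),
  and for s = 0 it holds trivially.\<close>

lemma cont_expr_Vfun:
  fixes \<eta> \<kappa>r :: real and \<rho>b \<rho>d \<kappa>i v :: "nat \<Rightarrow> real"
  assumes "\<eta> + \<kappa>r \<noteq> 0" and "\<rho>d 0 = 0" and D_nz: "\<eta> + \<rho>b c + \<rho>d c + \<kappa>i c \<noteq> 0"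
  shows "cont_expr \<eta> \<kappa>r \<rho>b \<rho>d \<kappa>i (Vfun \<eta> \<kappa>r v) s c i
     = real s * (\<eta> + \<rho>b c + \<rho>d c + \<kappa>i c) * (scalar_rhs \<eta> \<kappa>r \<rho>b \<rho>d \<kappa>i v c - v c)"
proof -
  define D where "D = \<eta> + \<rho>b c + \<rho>d c + \<kappa>i c"
  define a where "a = 1 / (\<eta> + \<kappa>r)"
  define w where "w = (if c = 0 then 0 else \<rho>d c * v (c - 1))"
  have a_inv: "(\<eta> + \<kappa>r) * a = 1"
    using assms(1) by (simp add: a_def)
  have div_a: "x / (\<eta> + \<kappa>r) = x * a" for x
    by (simp add: a_def)
  have death: "(if c = 0 then 0 else \<rho>d c * Vfun \<eta> \<kappa>r v s (c - 1) i) = real s * w + \<rho>d c * real i * a"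
    using assms(2) by (simp add: w_def Vfun_def div_a algebra_simps)
  have infection: "(if s = 0 then 0 else real s * \<kappa>i c * Vfun \<eta> \<kappa>r v (s - 1) c (i + 1))
      = real s * \<kappa>i c * ((real s - 1) * v c + (real i + 1) * a)"
    by (cases s) (simp_all add: Vfun_def div_a)
  have recovery: "(if i = 0 then 0 else real i * \<kappa>r * Vfun \<eta> \<kappa>r v s c (i - 1))
      = real i * \<kappa>r * (real s * v c + (real i - 1) * a)"
    by (cases i) (simp_all add: Vfun_def div_a)
  have "cont_expr \<eta> \<kappa>r \<rho>b \<rho>d \<kappa>i (Vfun \<eta> \<kappa>r v) s c i
      = real s * (\<rho>b c * v (c + 1) + w + \<kappa>i c * a - D * v c) + real i * (1 - (\<eta> + \<kappa>r) * a)"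
    unfolding cont_expr_def death infection recovery
    by (simp add: Vfun_def div_a D_def algebra_simps)
  also have "\<dots> = real s * D * ((\<rho>b c * v (c + 1) + w + \<kappa>i c * a) / D - v c)"
    using D_nz unfolding a_inv by (simp add: D_def field_simps)
  finally show ?thesis
    by (simp add: scalar_rhs_def D_def w_def div_a)
qed

lemma interv_expr_Vfun:
  assumes "1 \<le> s"
  shows "interv_expr lam (Vfun \<eta> \<kappa>r v) s c i = lam - v c"
  using assms by (simp add: interv_expr_def Vfun_def of_nat_diff algebra_simps)

lemma bounded_Vfun_stateX:
  assumes "bounded (range v)"
  shows "bounded ((\<lambda>(s, c, i). Vfun \<eta> \<kappa>r v s c i) ` stateX S I)"
proof -
  obtain B where B: "\<And>c. \<bar>v c\<bar> \<le> B"
    using assms by (auto simp: bounded_iff)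
  have "\<bar>Vfun \<eta> \<kappa>r v s c i\<bar> \<le> real S * B + real (S + I) / \<bar>\<eta> + \<kappa>r\<bar>"
    if "s \<le> S" and "i \<le> S + I" for s c i
  proof -
    have "\<bar>real s * v c\<bar> \<le> real S * B"
      using that B[of c] by (simp add: abs_mult mult_mono)
    moreover have "\<bar>real i / (\<eta> + \<kappa>r)\<bar> \<le> real (S + I) / \<bar>\<eta> + \<kappa>r\<bar>"
      using that by (simp add: divide_right_mono)
    ultimately show ?thesis
      unfolding Vfun_def by linarith
  qed
  then show ?thesis
    unfolding bounded_iff stateX_def by fastforce
qed

lemma min_scaled_residual_eq_0:
  fixes k r l x :: real
  assumes "k > 0" and "x = min r l"
  shows "min (k * (r - x)) (l - x) = 0"
  using assms by (cases "r \<le> l") (simp_all add: min_def mult_le_0_iff)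

theorem lemma5p1:
  fixes S I :: nat and \<eta> \<kappa>r lam :: real
    and \<rho>b \<rho>d \<kappa>i v :: "nat \<Rightarrow> real"
  assumes "\<eta> > 0" and "\<kappa>r > 0" and "lam > 0"
    and "\<forall>c. \<rho>b c \<ge> 0" and "\<forall>c. \<rho>d c \<ge> 0" and "\<forall>c. \<kappa>i c \<ge> 0"
    and "bounded (range \<rho>b)" and "bounded (range \<rho>d)" and "bounded (range \<kappa>i)"
    and "\<rho>b 0 = 0" and "\<rho>d 0 = 0" and "\<kappa>i 0 = 0"
    and "bounded (range v)"
    and "\<forall>c. v c = min (scalar_rhs \<eta> \<kappa>r \<rho>b \<rho>d \<kappa>i v c) lam"
  shows "bounded ((\<lambda>(s, c, i). Vfun \<eta> \<kappa>r v s c i) ` stateX S I)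
    \<and> (\<forall>(s, c, i) \<in> stateX S I. s \<ge> 1 \<longrightarrow>
          min (cont_expr \<eta> \<kappa>r \<rho>b \<rho>d \<kappa>i (Vfun \<eta> \<kappa>r v) s c i)
              (interv_expr lam (Vfun \<eta> \<kappa>r v) s c i) = 0)
    \<and> (\<forall>(s, c, i) \<in> stateX S I. s = 0 \<longrightarrow>
          cont_expr \<eta> \<kappa>r \<rho>b \<rho>d \<kappa>i (Vfun \<eta> \<kappa>r v) s c i = 0)
    \<and> (\<forall>(s, c, i) \<in> stateX S I. s \<ge> 1 \<longrightarrow>
          ((scalar_rhs \<eta> \<kappa>r \<rho>b \<rho>d \<kappa>i v c = v c) \<longleftrightarrow>
             (cont_expr \<eta> \<kappa>r \<rho>b \<rho>d \<kappa>i (Vfun \<eta> \<kappa>r v) s c i = 0))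
        \<and> ((lam = v c) \<longleftrightarrow> (interv_expr lam (Vfun \<eta> \<kappa>r v) s c i = 0)))"
proof -
  have D_pos: "\<eta> + \<rho>b c + \<rho>d c + \<kappa>i c > 0" for c
    using assms(1,4-6) by (smt (verit))
  have cont: "cont_expr \<eta> \<kappa>r \<rho>b \<rho>d \<kappa>i (Vfun \<eta> \<kappa>r v) s c i
      = real s * (\<eta> + \<rho>b c + \<rho>d c + \<kappa>i c) * (scalar_rhs \<eta> \<kappa>r \<rho>b \<rho>d \<kappa>i v c - v c)"
    for s c i
    using assms(1,2,11) D_pos[of c] by (intro cont_expr_Vfun) auto
  have scale_pos: "real s * (\<eta> + \<rho>b c + \<rho>d c + \<kappa>i c) > 0" if "1 \<le> s" for s c
    using that D_pos[of c] by simp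
  have "min (cont_expr \<eta> \<kappa>r \<rho>b \<rho>d \<kappa>i (Vfun \<eta> \<kappa>r v) s c i)
      (interv_expr lam (Vfun \<eta> \<kappa>r v) s c i) = 0" if "1 \<le> s" for s c i
    unfolding cont interv_expr_Vfun[OF that]
    using scale_pos[OF that] assms(14) by (intro min_scaled_residual_eq_0) auto
  moreover have "((scalar_rhs \<eta> \<kappa>r \<rho>b \<rho>d \<kappa>i v c = v c) \<longleftrightarrow>
        (cont_expr \<eta> \<kappa>r \<rho>b \<rho>d \<kappa>i (Vfun \<eta> \<kappa>r v) s c i = 0))
      \<and> ((lam = v c) \<longleftrightarrow> (interv_expr lam (Vfun \<eta> \<kappa>r v) s c i = 0))" if "1 \<le> s" for s c i
    using that D_pos[of c] by (simp add: cont interv_expr_Vfun[OF that])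
  ultimately show ?thesis
    using bounded_Vfun_stateX[OF assms(13)] by (auto simp: cont)
qed

end
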